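(* Let $\mathsf{L}$ be a logic, $\mathsf{L}'$ a fragment of $\mathsf{L}$, $\mathcal{C}$ a class of $\mathsf{L}$-models and $\Theta$ an $(\mathsf{L},\mathcal{C})$-pair. Let $\mathcal{S}\subseteq\mathcal{C}$ be a finite set of $\mathsf{L}$-models and $\mathcal{R}\subseteq\mathsf{Fm}^f_{\mathsf{L}}$ an $(\mathsf{L},\mathcal{S})$-learning property. If some (final) $\mathsf{L}'$-formula belongs to $\mathcal{R}$, then some $\mathsf{L}'$-formula $\psi\in\mathcal{R}$ satisfies $\mathsf{sz}(\psi)\le\sum_{\tau\in\mathcal{T}}\prod_{M\in\mathcal{S}}|\mathsf{SEM}_M(\tau)|$.
   Context: A logic $\mathsf{L}$ is given by $(\mathcal{T},\mathcal{T}_f,\mathsf{Op},(\tau_o)_{o\in\mathsf{Op}},T)$: a non-empty finite set $\mathcal{T}$ of types, final types $\emptyset\ne\mathcal{T}_f\subseteq\mathcal{T}$, operators $\mathsf{Op}=\mathsf{Op}_0\uplus\mathsf{Op}_1\uplus\mathsf{Op}_2$ (by arity) with $\mathsf{Op}_0\ne\emptyset$, each $o$ having a type $\tau_o$ and allowed argument-type sets $T(o,i)\subseteq\mathcal{T}$. Formulas of type $\tau$ ($\mathsf{Fm}_{\mathsf{L}}(\tau)$) are built inductively: $o\in\mathsf{Op}_0$ has type $\tau_o$; $o(\varphi_1)$, resp. $o(\varphi_1,\varphi_2)$, has type $\tau_o$ when each $\varphi_i$ has a type in $T(o,i)$. $\mathsf{Fm}_{\mathsf{L}}(X)=\bigcup_{\tau\in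 X}\mathsf{Fm}_{\mathsf{L}}(\tau)$, final formulas $\mathsf{Fm}^f_{\mathsf{L}}=\mathsf{Fm}_{\mathsf{L}}(\mathcal{T}_f)$. A fragment $\mathsf{L}'$ uses the same syntax with an operator set $\mathsf{Op}'\subseteq\mathsf{Op}$. $\mathsf{sz}(\varphi)$ is the number of distinct subformulas of $\varphi$. An $\mathsf{L}$-model $M$ has a satisfaction relation $M\models\varphi$ for final formulas; a class of models is a set of them. An $(\mathsf{L},\mathcal{S})$-learning property is a set $\mathcal{R}\subseteq\mathsf{Fm}^f_{\mathsf{L}}$ such that, with $\mathcal{R}_{\mathcal{S}}=\{\{M\in\mathcal{S}: M\models\varphi\}:\varphi\in\mathcal{R}\}$, every final formula $\varphi$ satisfies: $\{M\in\mathcal{S}:M\models\varphi\}\in\mathcal{R}_{\mathcal{S}}$ iff $\varphi\in\mathcal{R}$. An $(\mathsf{L},M)$-pair: a finite set $\mathsf{SEM}_M=\bigcup_\tau\mathsf{SEM}_M(\tau)$ with pairwise disjoint parts and $\mathsf{sem}_M:\mathsf{Fm}_{\mathsf{L}}\to\mathsf{SEM}_M$ sending type-$\tau$ formulas into $\mathsf{SEM}_M(\tau)$; $\mathsf{SEM}_M(X)=\bigcup_{\tau\in X}\mathsf{SEM}_M(\tau)$. It captures the $\mathsf{L}$-semantics if final formulas of the same type with the same $\mathsf{sem}_M$-value are either both satisfied or both not satisfied by $M$. It satisfies the inductive property if for every $o\in\mathsf{Op}_1$ there is $\mathsf{sem}^o_M:\mathsf{SEM}_M(T(o,1))\to\mathsf{SEM}_M(\tau_o)$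 with $\mathsf{sem}_M(o(\varphi_1))=\mathsf{sem}^o_M(\mathsf{sem}_M(\varphi_1))$ for all $\varphi_1\in\mathsf{Fm}_{\mathsf{L}}(T(o,1))$, and for every $o\in\mathsf{Op}_2$ there is $\mathsf{sem}^o_M:\mathsf{SEM}_M(T(o,1))\times\mathsf{SEM}_M(T(o,2))\to\mathsf{SEM}_M(\tau_o)$ with $\mathsf{sem}_M(o(\varphi_1,\varphi_2))=\mathsf{sem}^o_M(\mathsf{sem}_M(\varphi_1),\mathsf{sem}_M(\varphi_2))$. An $(\mathsf{L},\mathcal{C})$-pair is a family $(\Theta_M)_{M\in\mathcal{C}}$ of $(\mathsf{L},M)$-pairs $\Theta_M=(\mathsf{SEM}_M,\mathsf{sem}_M)$ each capturing the $\mathsf{L}$-semantics and satisfying the inductive property. *)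

theory Defs
  imports Main
begin

datatype 'c fm = Atom 'c | Una 'c "'c fm" | Bina 'c "'c fm" "'c fm"

record ('ty, 'c) logic =
  types :: "'ty set"
  ftypes :: "'ty set"
  ops0 :: "'c set"
  ops1 :: "'c set"
  ops2 :: "'c set"
  otype :: "'c \<Rightarrow> 'ty"
  argT :: "'c \<Rightarrow> nat \<Rightarrow> 'ty set"

definition ops :: "('ty, 'c) logic \<Rightarrow> 'c set" where
  "ops L = ops0 L \<union> ops1 L \<union> ops2 L"

definition is_logic :: "('ty, 'c) logic \<Rightarrow> bool" where
  "is_logic L \<longleftrightarrow>
     finite (types L) \<and> types L \<noteq> {} \<and>
     ftypes L \<noteq> {} \<and> ftypes L \<subseteq> types L \<and>
     ops0 L \<noteq> {} \<and>
     ops0 L \<inter> ops1 L = {} \<and> ops0 L \<inter> ops2 L = {} \<and> ops1 L \<inter> ops2 L = {} \<and>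
     (\<forall>c\<in>ops L. otype L c \<in> types L) \<and>
     (\<forall>c\<in>ops1 L. argT L c 1 \<subseteq> types L) \<and>
     (\<forall>c\<in>ops2 L. argT L c 1 \<subseteq> types L \<and> argT L c 2 \<subseteq> types L)"

fun has_type :: "('ty, 'c) logic \<Rightarrow> 'c fm \<Rightarrow> 'ty \<Rightarrow> bool" where
  "has_type L (Atom c) \<tau> \<longleftrightarrow> c \<in> ops0 L \<and> otype L c = \<tau>"
| "has_type L (Una c \<phi>) \<tau> \<longleftrightarrow> c \<in> ops1 L \<and> otype L c = \<tau> \<and>
     (\<exists>\<sigma>\<in>argT L c 1. has_type L \<phi> \<sigma>)"
| "has_type L (Bina c \<phi> \<psi>) \<tau> \<longleftrightarrow> c \<in> ops2 L \<and> otype L c = \<tau> \<and>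
     (\<exists>\<sigma>\<in>argT L c 1. has_type L \<phi> \<sigma>) \<and> (\<exists>\<sigma>\<in>argT L c 2. has_type L \<psi> \<sigma>)"

definition Fm :: "('ty, 'c) logic \<Rightarrow> 'ty set \<Rightarrow> 'c fm set" where
  "Fm L X = {\<phi>. \<exists>\<tau>\<in>X. has_type L \<phi> \<tau>}"

definition Fm_final :: "('ty, 'c) logic \<Rightarrow> 'c fm set" where
  "Fm_final L = Fm L (ftypes L)"

definition fragment :: "('ty, 'c) logic \<Rightarrow> 'c set \<Rightarrow> ('ty, 'c) logic" where
  "fragment L Op' = L\<lparr>ops0 := ops0 L \<inter> Op', ops1 := ops1 L \<inter> Op', ops2 := ops2 L \<inter> Op'\<rparr>"

definition is_fragment_ops :: "('ty, 'c) logic \<Rightarrow> 'c set \<Rightarrow> bool" where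
  "is_fragment_ops L Op' \<longleftrightarrow> Op' \<subseteq> ops L \<and> is_logic (fragment L Op')"

fun subformulas :: "'c fm \<Rightarrow> 'c fm set" where
  "subformulas (Atom c) = {Atom c}"
| "subformulas (Una c \<phi>) = insert (Una c \<phi>) (subformulas \<phi>)"
| "subformulas (Bina c \<phi> \<psi>) = insert (Bina c \<phi> \<psi>) (subformulas \<phi> \<union> subformulas \<psi>)"

definition sz :: "'c fm \<Rightarrow> nat" where
  "sz \<phi> = card (subformulas \<phi>)"

definition ext :: "('m \<Rightarrow> 'c fm \<Rightarrow> bool) \<Rightarrow> 'm set \<Rightarrow> 'c fm \<Rightarrow> 'm set" where
  "ext sat S \<phi> = {M\<in>S. sat M \<phi>}"

definition learning_property ::
  "('ty, 'c) logic \<Rightarrow> ('m \<Rightarrow> 'c fm \<Rightarrow> bool) \<Rightarrow> 'm set \<Rightarrow> 'c fm set \<Rightarrow> bool" where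
  "learning_property L sat S R \<longleftrightarrow>
     R \<subseteq> Fm_final L \<and>
     (\<forall>\<phi>\<in>Fm_final L. ext sat S \<phi> \<in> ext sat S ` R \<longleftrightarrow> \<phi> \<in> R)"

definition SEMs :: "('ty \<Rightarrow> 's set) \<Rightarrow> 'ty set \<Rightarrow> 's set" where
  "SEMs SEMM X = (\<Union>\<tau>\<in>X. SEMM \<tau>)"

definition LM_pair :: "('ty, 'c) logic \<Rightarrow> ('ty \<Rightarrow> 's set) \<Rightarrow> ('c fm \<Rightarrow> 's) \<Rightarrow> bool" where
  "LM_pair L SEMM semM \<longleftrightarrow>
     finite (SEMs SEMM (types L)) \<and>
     (\<forall>\<tau>\<in>types L. \<forall>\<tau>'\<in>types L. \<tau> \<noteq> \<tau>' \<longrightarrow> SEMM \<tau> \<inter> SEMM \<tau>' = {}) \<and>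
     (\<forall>\<tau>\<in>types L. \<forall>\<phi>. has_type L \<phi> \<tau> \<longrightarrow> semM \<phi> \<in> SEMM \<tau>)"

definition captures_semantics ::
  "('ty, 'c) logic \<Rightarrow> ('c fm \<Rightarrow> bool) \<Rightarrow> ('c fm \<Rightarrow> 's) \<Rightarrow> bool" where
  "captures_semantics L satM semM \<longleftrightarrow>
     (\<forall>\<tau>\<in>ftypes L. \<forall>\<phi> \<psi>. has_type L \<phi> \<tau> \<and> has_type L \<psi> \<tau> \<and> semM \<phi> = semM \<psi> \<longrightarrow>
        (satM \<phi> \<longleftrightarrow> satM \<psi>))"

definition inductive_property ::
  "('ty, 'c) logic \<Rightarrow> ('ty \<Rightarrow> 's set) \<Rightarrow> ('c fm \<Rightarrow> 's) \<Rightarrow> bool" where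
  "inductive_property L SEMM semM \<longleftrightarrow>
     (\<forall>c\<in>ops1 L. \<exists>f :: 's \<Rightarrow> 's.
        f ` SEMs SEMM (argT L c 1) \<subseteq> SEMM (otype L c) \<and>
        (\<forall>\<phi>\<in>Fm L (argT L c 1). semM (Una c \<phi>) = f (semM \<phi>))) \<and>
     (\<forall>c\<in>ops2 L. \<exists>f :: 's \<Rightarrow> 's \<Rightarrow> 's.
        (\<forall>a\<in>SEMs SEMM (argT L c 1). \<forall>b\<in>SEMs SEMM (argT L c 2). f a b \<in> SEMM (otype L c)) \<and>
        (\<forall>\<phi>\<in>Fm L (argT L c 1). \<forall>\<psi>\<in>Fm L (argT L c 2).
           semM (Bina c \<phi> \<psi>) = f (semM \<phi>) (semM \<psi>)))"

definition LC_pair ::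
  "('ty, 'c) logic \<Rightarrow> ('m \<Rightarrow> 'c fm \<Rightarrow> bool) \<Rightarrow> 'm set \<Rightarrow>
   ('m \<Rightarrow> 'ty \<Rightarrow> 's set) \<Rightarrow> ('m \<Rightarrow> 'c fm \<Rightarrow> 's) \<Rightarrow> bool" where
  "LC_pair L sat C SEM sem \<longleftrightarrow>
     (\<forall>M\<in>C. LM_pair L (SEM M) (sem M) \<and>
             captures_semantics L (sat M) (sem M) \<and>
             inductive_property L (SEM M) (sem M))"

end

theory Submission
  imports Defs "HOL-Library.FuncSet"
begin

text \<open>Take an \<open>L'\<close>-formula \<open>\<psi> \<in> R\<close> of least size and label each subformula \<open>\<theta>\<close> with its
  type and the tuple \<open>(sem\<^sub>M \<theta>)\<^sub>M\<^sub>\<in>\<^sub>S\<close>. If two distinct subformulas had the same label, replacing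
  every occurrence of the one that does not contain the other by the other would yield an
  \<open>L'\<close>-formula of the same type with the same semantics in every \<open>M \<in> S\<close>, hence again in \<open>R\<close>,
  but with strictly fewer subformulas. So the labelling is injective on the subformulas of
  \<open>\<psi>\<close>, and there are only \<open>\<Sum>\<^sub>\<tau> \<Prod>\<^sub>M |SEM\<^sub>M(\<tau>)|\<close> labels.\<close>

lemma subformulas_refl: "\<phi> \<in> subformulas \<phi>"
  by (cases \<phi>) auto

lemma subformulas_trans: "\<phi> \<in> subformulas \<psi> \<Longrightarrow> subformulas \<phi> \<subseteq> subformulas \<psi>"
  by (induction \<psi>) auto

lemma finite_subformulas: "finite (subformulas \<phi>)"
  by (induction \<phi>) auto

lemma subformulas_size: "\<phi> \<in> subformulas \<psi> \<Longrightarrow> \<phi> = \<psi> \<or> size \<phi> < size \<psi>"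
  by (induction \<psi>) auto

lemma subformulas_antisym: "\<phi> \<in> subformulas \<psi> \<Longrightarrow> \<psi> \<in> subformulas \<phi> \<Longrightarrow> \<phi> = \<psi>"
  using subformulas_size[of \<phi> \<psi>] subformulas_size[of \<psi> \<phi>] by auto

fun replace :: "'c fm \<Rightarrow> 'c fm \<Rightarrow> 'c fm \<Rightarrow> 'c fm" where
  "replace a b (Atom c) = (if Atom c = a then b else Atom c)"
| "replace a b (Una c \<phi>) = (if Una c \<phi> = a then b else Una c (replace a b \<phi>))"
| "replace a b (Bina c \<phi> \<psi>) =
     (if Bina c \<phi> \<psi> = a then b else Bina c (replace a b \<phi>) (replace a b \<psi>))"

lemma replace_self: "replace a b a = b"
  by (cases a) auto

lemma replace_not_subformula: "a \<notin> subformulas \<phi> \<Longrightarrow> replace a b \<phi> = \<phi>"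
  by (induction \<phi>) (auto simp: subformulas_refl)

lemma subformulas_replace:
  assumes "a \<notin> subformulas b"
  shows "subformulas (replace a b \<phi>) \<subseteq> replace a b ` (subformulas \<phi> \<union> subformulas b)"
proof -
  have "subformulas b \<subseteq> replace a b ` subformulas b"
    using assms subformulas_trans replace_not_subformula by (metis image_eqI subset_iff)
  then show ?thesis
    by (induction \<phi>) auto
qed

text \<open>Replacing \<open>a\<close> by \<open>b\<close> identifies these two subformulas and creates no new ones, since
  \<open>b\<close> is already a subformula that does not contain \<open>a\<close>.\<close>
lemma sz_replace_less:
  assumes "a \<in> subformulas \<phi>" "b \<in> subformulas \<phi>" "a \<noteq> b" "a \<notin> subformulas b"
  shows "sz (replace a b \<phi>) < sz \<phi>"
proof -
  have "subformulas (replace a b \<phi>) \<subseteq> replace a b ` subformulas \<phi>"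
    using subformulas_replace[OF assms(4)] subformulas_trans[OF assms(2)] by blast
  then have "sz (replace a b \<phi>) \<le> card (replace a b ` subformulas \<phi>)"
    unfolding sz_def by (simp add: card_mono finite_subformulas)
  also have "\<dots> < sz \<phi>"
  proof -
    have "replace a b a = replace a b b"
      using replace_self replace_not_subformula[OF assms(4)] by simp
    then have "\<not> inj_on (replace a b) (subformulas \<phi>)"
      using assms(1-3) by (meson inj_onD)
    then show ?thesis
      unfolding sz_def using finite_subformulas card_image_le inj_on_iff_eq_card
      by (metis le_neq_implies_less)
  qed
  finally show ?thesis .
qed

fun head_op :: "'c fm \<Rightarrow> 'c" where
  "head_op (Atom c) = c"
| "head_op (Una c \<phi>) = c"
| "head_op (Bina c \<phi> \<psi>) = c"

lemma has_type_otype_head: "has_type L \<phi> \<tau> \<Longrightarrow> \<tau> = otype L (head_op \<phi>)"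
  by (cases \<phi>) auto

lemma has_type_in_types: "is_logic L \<Longrightarrow> has_type L \<phi> \<tau> \<Longrightarrow> \<tau> \<in> types L"
  by (cases \<phi>) (auto simp: is_logic_def ops_def)

lemma subformula_has_type:
  "has_type L \<psi> \<tau> \<Longrightarrow> \<phi> \<in> subformulas \<psi> \<Longrightarrow> has_type L \<phi> (otype L (head_op \<phi>))"
  by (induction \<psi> arbitrary: \<tau>) auto

lemma has_type_replace:
  assumes "has_type L a \<sigma>" "has_type L b \<sigma>"
  shows "has_type L \<phi> \<tau> \<Longrightarrow> has_type L (replace a b \<phi>) \<tau>"
proof (induction \<phi> arbitrary: \<tau>)
  case (Atom c)
  then show ?case using assms has_type_otype_head by (metis replace.simps(1))
next
  case (Una c \<phi>)
  then show ?case using assms has_type_otype_head by (cases "Una c \<phi> = a") auto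
next
  case (Bina c \<phi> \<psi>)
  then show ?case using assms has_type_otype_head by (cases "Bina c \<phi> \<psi> = a") auto
qed

lemma fragment_simps [simp]:
  "types (fragment L Op') = types L" "ftypes (fragment L Op') = ftypes L"
  "otype (fragment L Op') = otype L"
  by (simp_all add: fragment_def)

lemma has_type_fragmentD: "has_type (fragment L Op') \<phi> \<tau> \<Longrightarrow> has_type L \<phi> \<tau>"
  by (induction \<phi> arbitrary: \<tau>) (auto simp: fragment_def)

lemma inductive_property_Una_cong:
  assumes "inductive_property L SEMM semM" "c \<in> ops1 L"
    and "\<phi> \<in> Fm L (argT L c 1)" "\<phi>' \<in> Fm L (argT L c 1)" "semM \<phi> = semM \<phi>'"
  shows "semM (Una c \<phi>) = semM (Una c \<phi>')"
proof -
  obtain f where f: "\<forall>\<chi>\<in>Fm L (argT L c 1). semM (Una c \<chi>) = f (semM \<chi>)"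
    using assms(1,2) unfolding inductive_property_def by (meson conjunct1 bspec)
  show ?thesis
    using f[rule_format, OF assms(3)] f[rule_format, OF assms(4)] assms(5) by simp
qed

lemma inductive_property_Bina_cong:
  assumes "inductive_property L SEMM semM" "c \<in> ops2 L"
    and "\<phi> \<in> Fm L (argT L c 1)" "\<phi>' \<in> Fm L (argT L c 1)" "semM \<phi> = semM \<phi>'"
    and "\<psi> \<in> Fm L (argT L c 2)" "\<psi>' \<in> Fm L (argT L c 2)" "semM \<psi> = semM \<psi>'"
  shows "semM (Bina c \<phi> \<psi>) = semM (Bina c \<phi>' \<psi>')"
proof -
  obtain f where f: "\<forall>\<chi>\<in>Fm L (argT L c 1). \<forall>\<chi>'\<in>Fm L (argT L c 2).
      semM (Bina c \<chi> \<chi>') = f (semM \<chi>) (semM \<chi>')"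
    using assms(1,2) unfolding inductive_property_def by (meson conjunct2 bspec)
  show ?thesis
    using f[rule_format, OF assms(3,6)] f[rule_format, OF assms(4,7)] assms(5,8) by simp
qed

lemma sem_replace:
  assumes ip: "inductive_property L SEMM semM"
    and ab: "has_type L a \<sigma>" "has_type L b \<sigma>" "semM a = semM b"
  shows "has_type L \<phi> \<tau> \<Longrightarrow> semM (replace a b \<phi>) = semM \<phi>"
proof (induction \<phi> arbitrary: \<tau>)
  case (Atom c)
  then show ?case using ab by simp
next
  case (Una c \<phi>)
  then obtain \<rho> where c: "c \<in> ops1 L" and \<rho>: "\<rho> \<in> argT L c 1" "has_type L \<phi> \<rho>"
    by auto
  then have "\<phi> \<in> Fm L (argT L c 1)" "replace a b \<phi> \<in> Fm L (argT L c 1)"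
    using has_type_replace[OF ab(1,2)] unfolding Fm_def by blast+
  then have "semM (Una c (replace a b \<phi>)) = semM (Una c \<phi>)"
    using inductive_property_Una_cong[OF ip c] Una.IH[OF \<rho>(2)] by blast
  then show ?case
    using ab(3) by auto
next
  case (Bina c \<phi> \<psi>)
  then obtain \<rho> \<rho>' where c: "c \<in> ops2 L" and \<rho>: "\<rho> \<in> argT L c 1" "has_type L \<phi> \<rho>"
      and \<rho>': "\<rho>' \<in> argT L c 2" "has_type L \<psi> \<rho>'"
    by auto
  then have "\<phi> \<in> Fm L (argT L c 1)" "replace a b \<phi> \<in> Fm L (argT L c 1)"
      "\<psi> \<in> Fm L (argT L c 2)" "replace a b \<psi> \<in> Fm L (argT L c 2)"
    using has_type_replace[OF ab(1,2)] unfolding Fm_def by blast+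
  then have "semM (Bina c (replace a b \<phi>) (replace a b \<psi>)) = semM (Bina c \<phi> \<psi>)"
    using inductive_property_Bina_cong[OF ip c] Bina.IH(1)[OF \<rho>(2)] Bina.IH(2)[OF \<rho>'(2)]
    by blast
  then show ?case
    using ab(3) by auto
qed

lemma learning_property_sat_cong:
  assumes "learning_property L sat S R" "\<psi> \<in> R" "\<phi> \<in> Fm_final L"
    and "\<forall>M\<in>S. sat M \<phi> \<longleftrightarrow> sat M \<psi>"
  shows "\<phi> \<in> R"
proof -
  have "ext sat S \<phi> = ext sat S \<psi>"
    using assms(4) unfolding ext_def by auto
  then show ?thesis
    using assms(1-3) unfolding learning_property_def by auto
qed

lemma learning_property_replace:
  assumes lp: "learning_property L sat S R" and lc: "LC_pair L sat C SEM sem" and "S \<subseteq> C"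
    and \<psi>: "\<psi> \<in> R" "has_type L \<psi> \<tau>" "\<tau> \<in> ftypes L"
    and ab: "has_type L a \<sigma>" "has_type L b \<sigma>" "\<forall>M\<in>S. sem M a = sem M b"
  shows "replace a b \<psi> \<in> R"
proof (rule learning_property_sat_cong[OF lp \<psi>(1)])
  have typed: "has_type L (replace a b \<psi>) \<tau>"
    using has_type_replace[OF ab(1,2) \<psi>(2)] .
  then show "replace a b \<psi> \<in> Fm_final L"
    using \<psi>(3) unfolding Fm_final_def Fm_def by blast
  show "\<forall>M\<in>S. sat M (replace a b \<psi>) \<longleftrightarrow> sat M \<psi>"
  proof
    fix M assume "M \<in> S"
    then have ip: "inductive_property L (SEM M) (sem M)"
        and captures: "captures_semantics L (sat M) (sem M)"
      using lc \<open>S \<subseteq> C\<close> unfolding LC_pair_def by auto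
    have "sem M a = sem M b"
      using ab(3) \<open>M \<in> S\<close> by blast
    then have "sem M (replace a b \<psi>) = sem M \<psi>"
      using sem_replace[OF ip ab(1,2) _ \<psi>(2)] by blast
    with captures show "sat M (replace a b \<psi>) \<longleftrightarrow> sat M \<psi>"
      using typed \<psi>(2,3) unfolding captures_semantics_def by blast
  qed
qed

definition signature ::
    "('ty, 'c) logic \<Rightarrow> 'm set \<Rightarrow> ('m \<Rightarrow> 'c fm \<Rightarrow> 's) \<Rightarrow> 'c fm \<Rightarrow> 'ty \<times> ('m \<Rightarrow> 's)"
  where "signature L S sem \<phi> = (otype L (head_op \<phi>), restrict (\<lambda>M. sem M \<phi>) S)"

lemma signature_inj_on_minimal:
  assumes lp: "learning_property L sat S R" and lc: "LC_pair L sat C SEM sem" and SC: "S \<subseteq> C"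
    and \<psi>: "\<psi> \<in> R \<inter> Fm_final (fragment L Op')"
    and minimal: "\<And>\<phi>. \<phi> \<in> R \<inter> Fm_final (fragment L Op') \<Longrightarrow> sz \<psi> \<le> sz \<phi>"
  shows "inj_on (signature L S sem) (subformulas \<psi>)"
proof -
  let ?L' = "fragment L Op'"
  obtain \<tau> where \<tau>: "\<tau> \<in> ftypes L" "has_type ?L' \<psi> \<tau>"
    using \<psi> unfolding Fm_final_def Fm_def by auto
  have no_merge: False
    if ab: "a \<in> subformulas \<psi>" "b \<in> subformulas \<psi>" "a \<noteq> b" "a \<notin> subformulas b"
      and same: "signature L S sem a = signature L S sem b" for a b
  proof -
    have "otype L (head_op a) = otype L (head_op b)"
      using same by (simp add: signature_def)
    moreover have "has_type ?L' a (otype L (head_op a))" "has_type ?L' b (otype L (head_op b))"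
      using subformula_has_type[OF \<tau>(2)] ab(1,2) by auto
    ultimately have typed_ab:
        "has_type ?L' a (otype L (head_op a))" "has_type ?L' b (otype L (head_op a))"
      by simp_all
    have "restrict (\<lambda>M. sem M a) S = restrict (\<lambda>M. sem M b) S"
      using same unfolding signature_def by simp
    then have "\<forall>M\<in>S. sem M a = sem M b"
      by (metis restrict_apply')
    then have "replace a b \<psi> \<in> R"
      using learning_property_replace[OF lp lc SC _ has_type_fragmentD[OF \<tau>(2)] \<tau>(1)
          has_type_fragmentD[OF typed_ab(1)] has_type_fragmentD[OF typed_ab(2)]] \<psi>
      by blast
    moreover have "replace a b \<psi> \<in> Fm_final ?L'"
      using has_type_replace[OF typed_ab \<tau>(2)] \<tau>(1) unfolding Fm_final_def Fm_def by auto
    ultimately have "sz \<psi> \<le> sz (replace a b \<psi>)"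
      using minimal by blast
    then show False
      using sz_replace_less[OF ab(1-4)] by simp
  qed
  show ?thesis
  proof (rule inj_onI, rule ccontr)
    fix a b
    assume "a \<in> subformulas \<psi>" "b \<in> subformulas \<psi>"
      and "signature L S sem a = signature L S sem b" and "a \<noteq> b"
    then show False
      using no_merge subformulas_antisym by metis
  qed
qed

lemma LC_pair_finite_SEM:
  assumes "LC_pair L sat C SEM sem" "M \<in> C" "\<tau> \<in> types L"
  shows "finite (SEM M \<tau>)"
proof -
  have "finite (SEMs (SEM M) (types L))"
    using assms(1,2) unfolding LC_pair_def LM_pair_def by blast
  then show ?thesis
    using assms(3) unfolding SEMs_def by (meson UN_upper finite_subset)
qed

lemma signature_mem:
  assumes "is_logic L" "LC_pair L sat C SEM sem" "S \<subseteq> C" "has_type L \<phi> \<tau>"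
  shows "signature L S sem \<phi> \<in> (SIGMA \<tau>:types L. \<Pi>\<^sub>E M\<in>S. SEM M \<tau>)"
proof -
  have "\<tau> \<in> types L"
    using has_type_in_types[OF assms(1,4)] .
  moreover have "sem M \<phi> \<in> SEM M \<tau>" if "M \<in> S" for M
    using assms(2-4) \<open>\<tau> \<in> types L\<close> that unfolding LC_pair_def LM_pair_def by blast
  ultimately show ?thesis
    using has_type_otype_head[OF assms(4)] unfolding signature_def by auto
qed

lemma card_Sigma_PiE:
  assumes "finite A" "finite S" "\<And>a M. a \<in> A \<Longrightarrow> M \<in> S \<Longrightarrow> finite (F a M)"
  shows "card (SIGMA a:A. \<Pi>\<^sub>E M\<in>S. F a M) = (\<Sum>a\<in>A. \<Prod>M\<in>S. card (F a M))"
proof -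
  have "card (SIGMA a:A. \<Pi>\<^sub>E M\<in>S. F a M) = (\<Sum>a\<in>A. card (\<Pi>\<^sub>E M\<in>S. F a M))"
    using assms by (intro card_SigmaI) (auto intro: finite_PiE)
  also have "\<dots> = (\<Sum>a\<in>A. \<Prod>M\<in>S. card (F a M))"
    using assms(2) by (simp add: card_PiE)
  finally show ?thesis .
qed

theorem proposition6:
  fixes L :: "('ty, 'c) logic"
    and Op' :: "'c set"
    and sat :: "'m \<Rightarrow> 'c fm \<Rightarrow> bool"
    and C S :: "'m set"
    and SEM :: "'m \<Rightarrow> 'ty \<Rightarrow> 's set"
    and sem :: "'m \<Rightarrow> 'c fm \<Rightarrow> 's"
    and R :: "'c fm set"
  assumes "is_logic L"
    and "is_fragment_ops L Op'"
    and "LC_pair L sat C SEM sem"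
    and "S \<subseteq> C" and "finite S"
    and "learning_property L sat S R"
    and "R \<inter> Fm_final (fragment L Op') \<noteq> {}"
  shows "\<exists>\<psi>\<in>R \<inter> Fm_final (fragment L Op').
           sz \<psi> \<le> (\<Sum>\<tau>\<in>types L. \<Prod>M\<in>S. card (SEM M \<tau>))"
proof -
  let ?F = "R \<inter> Fm_final (fragment L Op')"
  let ?labels = "SIGMA \<tau>:types L. \<Pi>\<^sub>E M\<in>S. SEM M \<tau>"
  obtain \<psi>\<^sub>0 where "\<psi>\<^sub>0 \<in> ?F"
    using assms(7) by blast
  then obtain \<psi> where \<psi>: "\<psi> \<in> ?F" and minimal: "\<And>\<phi>. \<phi> \<in> ?F \<Longrightarrow> sz \<psi> \<le> sz \<phi>"
    using ex_has_least_nat[of "\<lambda>\<phi>. \<phi> \<in> ?F" \<psi>\<^sub>0 sz] by blast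
  obtain \<tau> where \<tau>: "has_type (fragment L Op') \<psi> \<tau>"
    using \<psi> unfolding Fm_final_def Fm_def by blast
  have "has_type L \<phi> (otype L (head_op \<phi>))" if "\<phi> \<in> subformulas \<psi>" for \<phi>
    using has_type_fragmentD[OF subformula_has_type[OF \<tau> that]] by simp
  then have labels: "signature L S sem ` subformulas \<psi> \<subseteq> ?labels"
    using signature_mem[OF assms(1,3,4)] by blast
  have finite_types: "finite (types L)"
    using assms(1) by (simp add: is_logic_def)
  have finite_SEM: "\<And>\<tau> M. \<tau> \<in> types L \<Longrightarrow> M \<in> S \<Longrightarrow> finite (SEM M \<tau>)"
    using LC_pair_finite_SEM[OF assms(3)] assms(4) by blast
  have "finite ?labels"
    using finite_types assms(5) finite_SEM by (intro finite_SigmaI finite_PiE)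
  have "sz \<psi> = card (signature L S sem ` subformulas \<psi>)"
    using signature_inj_on_minimal[OF assms(6,3,4) \<psi> minimal] by (simp add: card_image sz_def)
  also have "\<dots> \<le> card ?labels"
    using labels \<open>finite ?labels\<close> by (rule card_mono[rotated])
  also have "\<dots> = (\<Sum>\<tau>\<in>types L. \<Prod>M\<in>S. card (SEM M \<tau>))"
    by (rule card_Sigma_PiE[OF finite_types assms(5) finite_SEM])
  finally show ?thesis
    using \<psi> by blast
qed

end
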